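(* Let $P,Q$ be convex $n$-dimensional polytopes in an $n$-dimensional real vector space $E$, each containing the origin in its interior, and let $X=\partial P$, $Y=\partial Q$. Let $\psi:\mathcal F(X)\to\mathcal F(Y)$ be an order-preserving map and $\psi^*:\mathcal F(\partial P^\circ)\to\mathcal F(\partial Q^\circ)$ its dual map. Then $\operatorname{c.deg}\psi=\operatorname{c.deg}\psi^*$.
   Context: For a convex $n$-dimensional polytope $P$, the boundary $\partial P$ (with its faces) is an $(n-1)$-dimensional polyhedral set; $\mathcal F(\partial P)$ is the set of proper faces of $P$ ordered by inclusion. For an order-preserving $\psi:\mathcal F(\partial P)\to\mathcal F(\partial Q)$, a continuous map $f:\partial P\to\partial Q$ is characteristic for $\psi$ if $f(G)\subset\psi(G)$ for all $G$; such maps exist and are all homotopic. Orienting $P$ and $Q$ gives isomorphisms $H_{n-1}(\partial P)\cong\mathbb Z\cong H_{n-1}(\partial Q)$, under which $H_{n-1}(f)$ is multiplication by an integer, called the combinatorial degree $\operatorname{c.deg}\psi$. Here $P,Q$ are oriented by a fixed orientation of $E$, and $P^\circ,Q^\circ$ by the dual orientation of $E^*$. The polar polytope is $P^\circ=\{v\in E^*:\langle u,v\rangle\ge -1\ \forall u\in P\}$; there is an order-reversing bijection $G\mapsto G^*$ from proper faces of $P$ to proper faces of $P^\circ$ with $\dim G^*=n-1-\dim G$. The dual map is defined by $\psi^*(G^* )=(\psi(G))^*$; it is order-preserving. *)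

theory Defs
  imports "HOL-Analysis.Analysis" "HOL-Homology.Homology"
begin

text \<open>The space E is real^'n (dimension n = CARD('n)); the dual space E* is identified
  with real^'n via the standard inner product (the dual orientation of the standard
  orientation is then again the standard orientation).\<close>

text \<open>Proper faces of a polytope P: nonempty faces different from P.
  For an n-dimensional polytope these are exactly the faces of the boundary complex.\<close>
definition proper_faces :: "(real^'n) set \<Rightarrow> (real^'n) set set" where
  "proper_faces P = {F. F face_of P \<and> F \<noteq> {} \<and> F \<noteq> P}"

definition polar :: "(real^'n) set \<Rightarrow> (real^'n) set" where
  "polar P = {v. \<forall>u\<in>P. u \<bullet> v \<ge> -1}"

definition dual_face :: "(real^'n) set \<Rightarrow> (real^'n) set \<Rightarrow> (real^'n) set" where
  "dual_face P G = {v \<in> polar P. \<forall>u\<in>G. u \<bullet> v = -1}"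

definition order_preserving_faces ::
    "(real^'n) set \<Rightarrow> (real^'n) set \<Rightarrow> ((real^'n) set \<Rightarrow> (real^'n) set) \<Rightarrow> bool" where
  "order_preserving_faces P Q \<psi> \<longleftrightarrow>
     (\<forall>G\<in>proper_faces P. \<psi> G \<in> proper_faces Q) \<and>
     (\<forall>G\<in>proper_faces P. \<forall>H\<in>proper_faces P. G \<subseteq> H \<longrightarrow> \<psi> G \<subseteq> \<psi> H)"

text \<open>Dual map: psi*(G*) = (psi G)*, i.e. for a proper face H of the polar of P,
  psi*(H) = (psi G)* where G is the unique proper face of P with G* = H.\<close>
definition dual_map ::
    "(real^'n) set \<Rightarrow> (real^'n) set \<Rightarrow> ((real^'n) set \<Rightarrow> (real^'n) set) \<Rightarrow> (real^'n) set \<Rightarrow> (real^'n) set" where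
  "dual_map P Q \<psi> H = dual_face Q (\<psi> (THE G. G \<in> proper_faces P \<and> dual_face P G = H))"

definition characteristic_map ::
    "(real^'n) set \<Rightarrow> (real^'n) set \<Rightarrow> ((real^'n) set \<Rightarrow> (real^'n) set) \<Rightarrow> (real^'n \<Rightarrow> real^'n) \<Rightarrow> bool" where
  "characteristic_map P Q \<psi> f \<longleftrightarrow>
     continuous_map (subtopology euclidean (frontier P)) (subtopology euclidean (frontier Q)) f \<and>
     (\<forall>G\<in>proper_faces P. f ` G \<subseteq> \<psi> G)"

text \<open>Degree of a map f from the boundary of P to the boundary of Q (both containing the
  origin in their interior), where both boundaries carry the boundary orientation induced
  by the same orientation of E. Both inclusions of the boundaries into E - {0} induce
  isomorphisms on (reduced) homology in degree n-1, compatible with these orientations;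
  so H_(n-1)(f) is multiplication by d iff for every class c of the boundary of P,
  (incl_Q o f)_*(c) = d * (incl_P)_*(c) in H_(n-1)(E - {0}).\<close>
definition map_degree_is ::
    "(real^'n) set \<Rightarrow> (real^'n) set \<Rightarrow> (real^'n \<Rightarrow> real^'n) \<Rightarrow> int \<Rightarrow> bool" where
  "map_degree_is P Q f d \<longleftrightarrow>
     (\<forall>c \<in> carrier (reduced_homology_group (int CARD('n) - 1) (subtopology euclidean (frontier P))).
        hom_induced (int CARD('n) - 1) (subtopology euclidean (frontier P)) {}
                    (subtopology euclidean (- {0})) {} f c
      = pow (homology_group (int CARD('n) - 1) (subtopology euclidean (- {0})))
            (hom_induced (int CARD('n) - 1) (subtopology euclidean (frontier P)) {}
                    (subtopology euclidean (- {0})) {} id c) d)"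

definition cdeg ::
    "(real^'n) set \<Rightarrow> (real^'n) set \<Rightarrow> ((real^'n) set \<Rightarrow> (real^'n) set) \<Rightarrow> int" where
  "cdeg P Q \<psi> = (THE d. \<exists>f. characteristic_map P Q \<psi> f \<and> map_degree_is P Q f d)"

end

(* Let f and g be characteristic maps for psi and for its dual. If x lies on the boundary of P,
   y on the boundary of the polar of P, and <x, y> = -1, then x lies in the face
   G = {x' in P. <x', y> = -1} and y in its dual face G*, so f x is in psi G and g y in (psi G)*,
   whence <f x, g y> = -1. By compactness <f x, g y> < 0 persists while <x, y> is close to -1;
   a partition of unity followed by radial projection then yields a map phi from the boundary of
   the polar to the boundary of P with <phi y, y> < 0 and <f (phi y), g y> < 0. Straight-line
   homotopies in E - {0} give phi ~ -id and f o phi ~ -g, so g has the degree of f. Exchanging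
   P with its polar (bipolar theorem) gives the converse, so both degree predicates hold for
   the same integers. *)

theory Submission
  imports Defs
begin

section \<open>Polar sets\<close>

lemma polar_inner_ge: "u \<in> P \<Longrightarrow> v \<in> polar P \<Longrightarrow> -1 \<le> u \<bullet> v"
  by (simp add: polar_def)

lemma polar_eq_Inter: "polar P = (\<Inter>u\<in>P. {v. -1 \<le> u \<bullet> v})"
  by (auto simp: polar_def)

lemma zero_in_polar: "0 \<in> polar P"
  by (simp add: polar_def)

lemma convex_polar: "convex (polar P)"
  unfolding polar_eq_Inter by (intro convex_INT ballI convex_halfspace_ge)

lemma closed_polar: "closed (polar P)"
  unfolding polar_eq_Inter by (intro closed_INT ballI closed_halfspace_ge)

lemma frontier_polar_subset: "frontier (polar P) \<subseteq> polar P"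
  using closed_polar frontier_subset_closed by blast

lemma bounded_polar:
  fixes P :: "(real^'n) set"
  assumes "0 \<in> interior P"
  shows "bounded (polar P)"
proof -
  obtain e where e: "e > 0" "ball 0 e \<subseteq> P"
    using assms mem_interior by blast
  have "norm v \<le> 2 / e" if v: "v \<in> polar P" for v
  proof (cases "v = 0")
    case False
    define u where "u = (- (e/2) / norm v) *\<^sub>R v"
    have "u \<in> P"
      using False e by (auto simp: u_def)
    then have "-1 \<le> u \<bullet> v"
      using v polar_inner_ge by blast
    also have "u \<bullet> v = - (e/2) * norm v"
      using False by (simp add: u_def dot_square_norm power2_eq_square)
    finally show ?thesis
      using e by (simp add: field_simps)
  qed (use e in simp)
  then show ?thesis
    by (meson bounded_iff)
qed

lemma mem_interior_polar:
  fixes A :: "(real^'n) set"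
  assumes "bounded A" "0 < \<delta>" "\<And>u. u \<in> A \<Longrightarrow> -1 + \<delta> \<le> u \<bullet> y"
  shows "y \<in> interior (polar A)"
proof -
  obtain R where R: "R > 0" "\<And>u. u \<in> A \<Longrightarrow> norm u \<le> R"
    using assms(1) bounded_pos by metis
  have "ball y (\<delta> / R) \<subseteq> polar A"
  proof
    fix y'
    assume y': "y' \<in> ball y (\<delta> / R)"
    have "-1 \<le> u \<bullet> y'" if "u \<in> A" for u
    proof -
      have "\<bar>u \<bullet> (y' - y)\<bar> \<le> norm u * norm (y' - y)"
        by (rule Cauchy_Schwarz_ineq2)
      also have "\<dots> \<le> R * (\<delta> / R)"
        using R that y' by (intro mult_mono) (auto simp: dist_norm norm_minus_commute)
      finally have "u \<bullet> y - \<delta> \<le> u \<bullet> y'"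
        using R by (simp add: inner_diff_right)
      then show ?thesis
        using assms(3)[OF that] by linarith
    qed
    then show "y' \<in> polar A"
      by (simp add: polar_def)
  qed
  then show ?thesis
    using assms(2) R by (meson centre_in_ball divide_pos_pos interior_maximal open_ball subsetD)
qed

lemma zero_in_interior_polar:
  fixes P :: "(real^'n) set"
  assumes "bounded P"
  shows "0 \<in> interior (polar P)"
  using mem_interior_polar[OF assms, of 1 0] by simp

lemma compact_polar:
  fixes P :: "(real^'n) set"
  assumes "0 \<in> interior P"
  shows "compact (polar P)"
  using bounded_polar[OF assms] closed_polar by (simp add: compact_eq_bounded_closed)

lemma polar_convex_hull: "polar (convex hull V) = polar V"
proof
  show "polar (convex hull V) \<subseteq> polar V"
    by (auto simp: polar_def hull_inc)
  show "polar V \<subseteq> polar (convex hull V)"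
  proof
    fix v
    assume "v \<in> polar V"
    then have "V \<subseteq> {u. -1 \<le> v \<bullet> u}"
      by (auto simp: polar_def inner_commute)
    then have "convex hull V \<subseteq> {u. -1 \<le> v \<bullet> u}"
      by (simp add: convex_halfspace_ge hull_minimal)
    then show "v \<in> polar (convex hull V)"
      by (auto simp: polar_def inner_commute)
  qed
qed

lemma polyhedron_polar: "finite V \<Longrightarrow> polyhedron (polar V)"
  unfolding polar_eq_Inter by (intro polyhedron_Inter) (auto intro: polyhedron_halfspace_ge)

lemma polytope_polar:
  fixes P :: "(real^'n) set"
  assumes "polytope P" "0 \<in> interior P"
  shows "polytope (polar P)"
proof -
  obtain V where "finite V" "P = convex hull V"
    using assms(1) polytope_def by blast
  then have "polyhedron (polar P)"
    by (simp add: polar_convex_hull polyhedron_polar)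
  then show ?thesis
    using bounded_polar[OF assms(2)] by (simp add: polytope_eq_bounded_polyhedron)
qed

lemma polar_polar:
  fixes P :: "(real^'n) set"
  assumes "convex P" "closed P" "0 \<in> P"
  shows "polar (polar P) = P"
proof
  show "P \<subseteq> polar (polar P)"
    by (auto simp: polar_def inner_commute)
  show "polar (polar P) \<subseteq> P"
  proof
    fix z
    assume z: "z \<in> polar (polar P)"
    show "z \<in> P"
    proof (rule ccontr)
      assume "z \<notin> P"
      then obtain a b where ab: "a \<bullet> z < b" "\<forall>x\<in>P. a \<bullet> x > b"
        using separating_hyperplane_closed_point[OF assms(1,2)] by blast
      have b: "b < 0"
        using ab(2) assms(3) by force
      have "(1 / - b) *\<^sub>R a \<in> polar P"
        using ab(2) b by (auto simp: polar_def inner_commute field_simps less_imp_le)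
      then have "-1 \<le> (1 / - b) *\<^sub>R a \<bullet> z"
        using z polar_inner_ge by blast
      then show False
        using ab(1) b by (simp add: field_simps)
    qed
  qed
qed

lemma polar_polar_polytope:
  fixes P :: "(real^'n) set"
  assumes "polytope P" "0 \<in> interior P"
  shows "polar (polar P) = P"
  using assms interior_subset by (intro polar_polar) (auto simp: polytope_imp_convex polytope_imp_closed)

lemma frontier_polar_touch:
  fixes A :: "(real^'n) set"
  assumes "compact A" "y \<in> frontier (polar A)"
  obtains x where "x \<in> A" "x \<bullet> y = -1"
proof -
  have "A \<noteq> {}"
    using assms(2) by (auto simp: polar_def)
  moreover have "continuous_on A (\<lambda>u. u \<bullet> y)"
    by (intro continuous_intros)
  ultimately obtain x where x: "x \<in> A" "\<And>u. u \<in> A \<Longrightarrow> x \<bullet> y \<le> u \<bullet> y"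
    using continuous_attains_inf[OF assms(1)] by blast
  have "x \<bullet> y \<le> -1"
  proof (rule ccontr)
    assume "\<not> x \<bullet> y \<le> -1"
    then have "y \<in> interior (polar A)"
      using x(2) by (intro mem_interior_polar[OF compact_imp_bounded[OF assms(1)], of "x \<bullet> y + 1"]) auto
    then show False
      using assms(2) by (simp add: frontier_def)
  qed
  moreover have "-1 \<le> x \<bullet> y"
    using x(1) assms(2) frontier_polar_subset polar_inner_ge by blast
  ultimately show ?thesis
    using that x(1) by simp
qed

section \<open>Faces and dual faces\<close>

lemma order_preserving_facesD:
  assumes "order_preserving_faces P Q \<psi>"
  shows "G \<in> proper_faces P \<Longrightarrow> \<psi> G \<in> proper_faces Q"
    and "G \<in> proper_faces P \<Longrightarrow> H \<in> proper_faces P \<Longrightarrow> G \<subseteq> H \<Longrightarrow> \<psi> G \<subseteq> \<psi> H"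
  using assms unfolding order_preserving_faces_def by blast+

lemma proper_faces_subset_frontier: "G \<in> proper_faces S \<Longrightarrow> G \<subseteq> frontier S"
  using face_of_disjoint_interior face_of_imp_subset closure_subset
  by (fastforce simp: proper_faces_def frontier_def)

lemma frontier_eq_Union_proper_faces:
  fixes P :: "(real^'n) set"
  assumes "polyhedron P" "interior P \<noteq> {}"
  shows "frontier P = \<Union>(proper_faces P)"
proof -
  have "frontier P = \<Union>{F. F face_of P \<and> F \<noteq> P}"
    using rel_frontier_of_polyhedron_alt[OF assms(1)] rel_frontier_nonempty_interior[OF assms(2)]
    by simp
  also have "\<dots> = \<Union>(proper_faces P)"
    by (auto simp: proper_faces_def)
  finally show ?thesis .
qed

lemma finite_proper_faces:
  fixes P :: "(real^'n) set"
  assumes "polyhedron P"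
  shows "finite (proper_faces P)"
proof -
  have "proper_faces P \<subseteq> {F. F face_of P}"
    by (auto simp: proper_faces_def)
  then show ?thesis
    using finite_polyhedron_faces[OF assms] by (rule finite_subset)
qed

lemma closed_Union_proper_faces:
  fixes P :: "(real^'n) set"
  assumes "polyhedron P"
  shows "closed (\<Union>{G \<in> proper_faces P. \<Phi> G})"
proof (rule closed_Union)
  show "finite {G \<in> proper_faces P. \<Phi> G}"
    using finite_proper_faces[OF assms] by simp
  show "\<forall>G\<in>{G \<in> proper_faces P. \<Phi> G}. closed G"
    using face_of_imp_closed[OF polyhedron_imp_convex[OF assms] polyhedron_imp_closed[OF assms]]
    by (simp add: proper_faces_def)
qed

lemma Inter_proper_faces_containing:
  fixes P :: "(real^'n) set"
  assumes "polyhedron P" "interior P \<noteq> {}" "x \<in> frontier P"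
  shows "\<Inter>{G \<in> proper_faces P. x \<in> G} \<in> proper_faces P"
proof -
  obtain G where G: "G \<in> proper_faces P" "x \<in> G"
    using assms frontier_eq_Union_proper_faces by blast
  have "\<Inter>{G \<in> proper_faces P. x \<in> G} face_of P"
    by (rule face_of_Inter) (use G in \<open>auto simp: proper_faces_def\<close>)
  moreover have "x \<in> \<Inter>{G \<in> proper_faces P. x \<in> G}"
    by blast
  moreover have "\<Inter>{G \<in> proper_faces P. x \<in> G} \<noteq> P"
    using G face_of_imp_subset[of G P] by (auto simp: proper_faces_def)
  ultimately show ?thesis
    unfolding proper_faces_def by blast
qed

lemma proper_face_polar_hyperplane:
  fixes P :: "(real^'n) set"
  assumes "convex P" "0 \<in> P" "y \<in> polar P" "x \<in> P" "x \<bullet> y = -1"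
  shows "{x \<in> P. x \<bullet> y = -1} \<in> proper_faces P"
proof -
  have "P \<inter> {x. y \<bullet> x = -1} face_of P"
    by (rule face_of_Int_supporting_hyperplane_ge) (use assms in \<open>auto simp: polar_def inner_commute\<close>)
  moreover have "P \<inter> {x. y \<bullet> x = -1} = {x \<in> P. x \<bullet> y = -1}"
    by (auto simp: inner_commute)
  ultimately have "{x \<in> P. x \<bullet> y = -1} face_of P"
    by simp
  moreover have "{x \<in> P. x \<bullet> y = -1} \<noteq> P"
    using assms(2) by force
  ultimately show ?thesis
    using assms(4,5) unfolding proper_faces_def by blast
qed

lemma proper_face_eq_polar_hyperplane:
  fixes P :: "(real^'n) set"
  assumes "polyhedron P" "0 \<in> interior P" "G \<in> proper_faces P"
  obtains y where "y \<in> polar P" "G = {x \<in> P. x \<bullet> y = -1}"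
proof -
  have G: "G face_of P" "G \<noteq> P"
    using assms(3) by (auto simp: proper_faces_def)
  then obtain a b where ab: "P \<subseteq> {x. a \<bullet> x \<le> b}" "G = P \<inter> {x. a \<bullet> x = b}"
  proof -
    have "G exposed_face_of P"
      using G(1) exposed_face_of_polyhedron[OF assms(1)] by blast
    then show ?thesis
      using that unfolding exposed_face_of_def by blast
  qed
  have "0 \<in> P"
    using assms(2) interior_subset by blast
  have "0 \<notin> G"
    using assms(2) face_of_disjoint_interior[OF G] by blast
  have "0 \<le> b"
    using ab(1) \<open>0 \<in> P\<close> by auto
  moreover have "b \<noteq> 0"
    using ab(2) \<open>0 \<in> P\<close> \<open>0 \<notin> G\<close> by auto
  ultimately have b: "b > 0"
    by simp
  define y where "y = (- 1 / b) *\<^sub>R a"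
  have xy: "x \<bullet> y = - (a \<bullet> x) / b" for x
    by (simp add: y_def inner_commute)
  show ?thesis
  proof
    show "y \<in> polar P"
      using ab(1) b by (auto simp: polar_def xy field_simps)
    show "G = {x \<in> P. x \<bullet> y = -1}"
      using ab(2) b by (auto simp: xy field_simps)
  qed
qed

lemma dual_face_antimono: "G \<subseteq> G' \<Longrightarrow> dual_face P G' \<subseteq> dual_face P G"
  by (auto simp: dual_face_def)

lemma dual_face_in_proper_faces:
  fixes P :: "(real^'n) set"
  assumes "polyhedron P" "0 \<in> interior P" "G \<in> proper_faces P"
  shows "dual_face P G \<in> proper_faces (polar P)"
proof -
  obtain y where y: "y \<in> polar P" "G = {x \<in> P. x \<bullet> y = -1}"
    using proper_face_eq_polar_hyperplane[OF assms] .
  have G: "G \<subseteq> P" "G \<noteq> {}"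
    using assms(3) face_of_imp_subset by (auto simp: proper_faces_def)
  have "dual_face P G = \<Inter>((\<lambda>u. polar P \<inter> {v. u \<bullet> v = -1}) ` G)"
    using G by (auto simp: dual_face_def)
  also have "\<dots> face_of polar P"
  proof (rule face_of_Inter)
    show "\<And>T. T \<in> (\<lambda>u. polar P \<inter> {v. u \<bullet> v = -1}) ` G \<Longrightarrow> T face_of polar P"
      using G(1) polar_inner_ge by (blast intro: face_of_Int_supporting_hyperplane_ge[OF convex_polar])
  qed (use G in simp)
  finally have "dual_face P G face_of polar P" .
  moreover have "y \<in> dual_face P G" "0 \<notin> dual_face P G"
    using y G(2) by (auto simp: dual_face_def)
  ultimately show ?thesis
    using zero_in_polar by (auto simp: proper_faces_def)
qed

lemma dual_face_dual_face:
  fixes P :: "(real^'n) set"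
  assumes "polytope P" "0 \<in> interior P" "G \<in> proper_faces P"
  shows "dual_face (polar P) (dual_face P G) = G"
proof -
  have "polar (polar P) = P"
    using assms(1,2) by (rule polar_polar_polytope)
  moreover obtain y where "y \<in> polar P" "G = {x \<in> P. x \<bullet> y = -1}"
    using proper_face_eq_polar_hyperplane[OF polytope_imp_polyhedron assms(2-3)] assms(1) .
  moreover have "y \<in> dual_face P G"
    using calculation(2,3) by (auto simp: dual_face_def)
  ultimately show ?thesis
    by (auto simp: dual_face_def inner_commute)
qed

lemma dual_face_polar:
  fixes P :: "(real^'n) set"
  assumes "polytope P" "0 \<in> interior P" "H \<in> proper_faces (polar P)"
  shows "dual_face (polar P) H \<in> proper_faces P" and "dual_face P (dual_face (polar P) H) = H"
proof -
  have PP: "polar (polar P) = P"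
    using assms(1,2) by (rule polar_polar_polytope)
  have "polytope (polar P)" "0 \<in> interior (polar P)"
    using assms polytope_polar zero_in_interior_polar polytope_imp_bounded by blast+
  then show "dual_face (polar P) H \<in> proper_faces P" "dual_face P (dual_face (polar P) H) = H"
    using dual_face_in_proper_faces[of "polar P"] dual_face_dual_face[of "polar P"] assms(3)
    by (simp_all add: PP polytope_imp_polyhedron)
qed

lemma dual_map_dual_face:
  fixes P :: "(real^'n) set"
  assumes "polytope P" "0 \<in> interior P" "G \<in> proper_faces P"
  shows "dual_map P Q \<psi> (dual_face P G) = dual_face Q (\<psi> G)"
proof -
  have "(THE G'. G' \<in> proper_faces P \<and> dual_face P G' = dual_face P G) = G"
  proof (rule the_equality)
    show "G' = G" if "G' \<in> proper_faces P \<and> dual_face P G' = dual_face P G" for G'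
      using that dual_face_dual_face[OF assms(1,2)] assms(3) by metis
  qed (use assms(3) in simp)
  then show ?thesis
    by (simp add: dual_map_def)
qed

lemma order_preserving_dual_map:
  fixes P Q :: "(real^'n) set"
  assumes P: "polytope P" "0 \<in> interior P" and Q: "polytope Q" "0 \<in> interior Q"
    and \<psi>: "order_preserving_faces P Q \<psi>"
  shows "order_preserving_faces (polar P) (polar Q) (dual_map P Q \<psi>)"
proof -
  note \<psi>Q = order_preserving_facesD(1)[OF \<psi>] and mono = order_preserving_facesD(2)[OF \<psi>]
  have dual_map: "dual_map P Q \<psi> H = dual_face Q (\<psi> (dual_face (polar P) H))"
    if "H \<in> proper_faces (polar P)" for H
    using dual_map_dual_face[OF P dual_face_polar(1)[OF P that]] dual_face_polar(2)[OF P that]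
    by simp
  show ?thesis
    unfolding order_preserving_faces_def
  proof (intro conjI ballI impI)
    fix H
    assume "H \<in> proper_faces (polar P)"
    then show "dual_map P Q \<psi> H \<in> proper_faces (polar Q)"
      using dual_map dual_face_in_proper_faces[OF polytope_imp_polyhedron Q(2)] Q(1)
        \<psi>Q dual_face_polar(1)[OF P] by simp
  next
    fix H H'
    assume H: "H \<in> proper_faces (polar P)" "H' \<in> proper_faces (polar P)" "H \<subseteq> H'"
    then have "\<psi> (dual_face (polar P) H') \<subseteq> \<psi> (dual_face (polar P) H)"
      using mono dual_face_polar(1)[OF P] dual_face_antimono by blast
    then show "dual_map P Q \<psi> H \<subseteq> dual_map P Q \<psi> H'"
      using H dual_map dual_face_antimono by simp
  qed
qed

section \<open>Characteristic maps\<close>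

lemma convex_selection_finite_open_cover:
  fixes D :: "'a::metric_space set" and c :: "'i \<Rightarrow> 'b::real_normed_vector"
  assumes I: "finite I" and U: "\<And>i. i \<in> I \<Longrightarrow> open (U i)" and cover: "D \<subseteq> (\<Union>i\<in>I. U i)"
    and T: "\<And>x. x \<in> D \<Longrightarrow> convex (T x)"
    and c: "\<And>x i. x \<in> D \<Longrightarrow> i \<in> I \<Longrightarrow> x \<in> U i \<Longrightarrow> c i \<in> T x"
  shows "\<exists>g. continuous_on D g \<and> (\<forall>x\<in>D. g x \<in> T x)"
proof -
  \<comment> \<open>\<open>infdist x {} = 0\<close>, hence the separate case \<open>U i = UNIV\<close>\<close>
  define w where "w i x = (if U i = UNIV then 1 else infdist x (- U i))" for i x
  have w_nonneg: "0 \<le> w i x" for i x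
    by (simp add: w_def infdist_nonneg)
  have w_pos: "0 < w i x \<longleftrightarrow> x \<in> U i" if "i \<in> I" for i x
    using U[OF that] in_closed_iff_infdist_zero[of "- U i" x] w_nonneg[of i x]
    by (auto simp: w_def closed_Compl less_le)
  have w_cont: "continuous_on D (w i)" for i
    unfolding w_def by (cases "U i = UNIV") (auto intro: continuous_on_infdist continuous_on_id)
  define W where "W x = (\<Sum>i\<in>I. w i x)" for x
  have W_pos: "0 < W x" if x: "x \<in> D" for x
  proof -
    obtain i where "i \<in> I" "x \<in> U i"
      using cover x by blast
    then show ?thesis
      unfolding W_def using w_pos w_nonneg by (intro sum_pos2[OF I]) auto
  qed
  define g where "g x = (\<Sum>i\<in>I. (w i x / W x) *\<^sub>R c i)" for x
  have "continuous_on D g"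
    unfolding g_def W_def
    by (intro continuous_intros w_cont) (use W_pos W_def in \<open>auto simp: less_le\<close>)
  moreover have "g x \<in> T x" if x: "x \<in> D" for x
  proof -
    define S where "S = {i \<in> I. x \<in> U i}"
    have S: "S \<subseteq> I" "finite S"
      using I by (auto simp: S_def)
    have zero: "w i x = 0" if "i \<in> I - S" for i
      using that w_pos w_nonneg by (force simp: S_def less_le)
    have "g x = (\<Sum>i\<in>S. (w i x / W x) *\<^sub>R c i)"
      unfolding g_def by (rule sum.mono_neutral_right[OF I S(1)]) (simp add: zero)
    also have "\<dots> \<in> T x"
    proof (rule convex_sum[OF S(2) T[OF x]])
      have "(\<Sum>i\<in>S. w i x / W x) = (\<Sum>i\<in>I. w i x) / W x"
        unfolding sum_divide_distrib by (rule sum.mono_neutral_left[OF I S(1)]) (simp add: zero)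
      then show "(\<Sum>i\<in>S. w i x / W x) = 1"
        using W_pos[OF x] by (simp add: W_def)
      show "\<And>i. i \<in> S \<Longrightarrow> 0 \<le> w i x / W x"
        using w_nonneg W_pos[OF x] by simp
      show "\<And>i. i \<in> S \<Longrightarrow> c i \<in> T x"
        using c[OF x] by (auto simp: S_def)
    qed
    finally show ?thesis .
  qed
  ultimately show ?thesis
    by blast
qed

lemma continuous_selection_proper_faces:
  fixes P Q :: "(real^'n) set"
  assumes P: "polyhedron P" "interior P \<noteq> {}" and \<psi>: "order_preserving_faces P Q \<psi>"
  shows "\<exists>f. continuous_on (frontier P) f \<and> (\<forall>x\<in>frontier P. f x \<in> \<Inter>(\<psi> ` {G \<in> proper_faces P. x \<in> G}))"
proof -
  note \<psi>Q = order_preserving_facesD(1)[OF \<psi>] and mono = order_preserving_facesD(2)[OF \<psi>]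
  \<comment> \<open>the points all of whose proper faces contain \<open>H\<close>; they cover the frontier because
    every frontier point has a smallest proper face\<close>
  define U where "U H = - \<Union>{G \<in> proper_faces P. \<not> H \<subseteq> G}" for H
  define c where "c H = (SOME z. z \<in> \<psi> H)" for H
  show ?thesis
  proof (rule convex_selection_finite_open_cover[of "proper_faces P" U _ _ c])
    show "finite (proper_faces P)"
      using P(1) by (rule finite_proper_faces)
    show "open (U H)" for H
      unfolding U_def using closed_Union_proper_faces[OF P(1)] by (rule open_Compl)
    show "frontier P \<subseteq> (\<Union>H\<in>proper_faces P. U H)"
    proof
      fix x
      assume x: "x \<in> frontier P"
      have "x \<in> U (\<Inter>{G \<in> proper_faces P. x \<in> G})"
        unfolding U_def by blast
      then show "x \<in> (\<Union>H\<in>proper_faces P. U H)"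
        using Inter_proper_faces_containing[OF P x] by blast
    qed
    have "convex (\<psi> G)" if "G \<in> proper_faces P" for G
      using \<psi>Q[OF that] face_of_imp_convex by (auto simp: proper_faces_def)
    then show "convex (\<Inter>(\<psi> ` {G \<in> proper_faces P. x \<in> G}))" for x
      by (intro convex_Inter) blast
    show "c H \<in> \<Inter>(\<psi> ` {G \<in> proper_faces P. x \<in> G})" if H: "H \<in> proper_faces P" and x: "x \<in> U H" for x H
    proof -
      have "\<psi> H \<noteq> {}"
        using \<psi>Q[OF H] by (simp add: proper_faces_def)
      then have "c H \<in> \<psi> H"
        unfolding c_def by (simp add: some_in_eq)
      moreover have "\<psi> H \<subseteq> \<psi> G" if "G \<in> proper_faces P" "x \<in> G" for G
        using that x H mono unfolding U_def by blast
      ultimately show ?thesis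
        by blast
    qed
  qed
qed

lemma characteristic_map_exists:
  fixes P Q :: "(real^'n) set"
  assumes P: "polyhedron P" "interior P \<noteq> {}" and \<psi>: "order_preserving_faces P Q \<psi>"
  obtains f where "characteristic_map P Q \<psi> f"
proof -
  obtain f where f: "continuous_on (frontier P) f"
    and f_faces: "\<And>x G. x \<in> frontier P \<Longrightarrow> G \<in> proper_faces P \<Longrightarrow> x \<in> G \<Longrightarrow> f x \<in> \<psi> G"
    using continuous_selection_proper_faces[OF P \<psi>] by blast
  have image: "f ` G \<subseteq> \<psi> G" if G: "G \<in> proper_faces P" for G
    using f_faces G proper_faces_subset_frontier[OF G] by blast
  have "f x \<in> frontier Q" if x: "x \<in> frontier P" for x
  proof -
    obtain G where G: "G \<in> proper_faces P" "x \<in> G"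
      using x frontier_eq_Union_proper_faces[OF P] by blast
    then show ?thesis
      using image proper_faces_subset_frontier[OF order_preserving_facesD(1)[OF \<psi> G(1)]] by blast
  qed
  then have "characteristic_map P Q \<psi> f"
    using f image by (auto simp: characteristic_map_def continuous_map_subtopology_eu)
  then show thesis ..
qed

lemma characteristic_map_punctured:
  assumes "characteristic_map P Q \<psi> f" "0 \<in> interior Q"
  shows "continuous_map (top_of_set (frontier P)) (top_of_set (- {0})) f"
proof -
  have "frontier Q \<subseteq> - {0}"
    using assms(2) by (auto simp: frontier_def)
  then show ?thesis
    using assms(1) by (auto simp: characteristic_map_def continuous_map_subtopology_eu Pi_iff)
qed

lemma characteristic_maps_inner:
  fixes P :: "(real^'n) set"
  assumes P: "polytope P" "0 \<in> interior P"
    and f: "characteristic_map P Q \<psi> f"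
    and g: "characteristic_map (polar P) (polar Q) (dual_map P Q \<psi>) g"
    and x: "x \<in> P" and y: "y \<in> polar P" and xy: "x \<bullet> y = -1"
  shows "f x \<bullet> g y = -1"
proof -
  define G where "G = {x' \<in> P. x' \<bullet> y = -1}"
  have G: "G \<in> proper_faces P"
    unfolding G_def using P interior_subset x y xy
    by (intro proper_face_polar_hyperplane) (auto simp: polytope_imp_convex)
  moreover have "x \<in> G"
    using x xy by (simp add: G_def)
  ultimately have fx: "f x \<in> \<psi> G"
    using f by (auto simp: characteristic_map_def)
  have "g ` dual_face P G \<subseteq> dual_map P Q \<psi> (dual_face P G)"
    using g dual_face_in_proper_faces[OF polytope_imp_polyhedron[OF P(1)] P(2) G]
    by (simp add: characteristic_map_def)
  then have "g ` dual_face P G \<subseteq> dual_face Q (\<psi> G)"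
    by (simp only: dual_map_dual_face[OF P G])
  moreover have "y \<in> dual_face P G"
    using y by (simp add: G_def dual_face_def)
  ultimately have "g y \<in> dual_face Q (\<psi> G)"
    by blast
  with fx show ?thesis
    by (simp add: dual_face_def)
qed

section \<open>Comparing degrees across polarity\<close>

lemma scaleR_mem_interior_convex:
  fixes K :: "'a::euclidean_space set"
  assumes "convex K" "0 \<in> interior K" "x \<in> closure K" "0 \<le> t" "t < 1"
  shows "t *\<^sub>R x \<in> interior K"
  using mem_interior_closure_convex_shrink[OF assms(1-3), of "1 - t"] assms(4,5)
  by (simp add: algebra_simps)

lemma ex1_ray_frontier:
  fixes K :: "'a::euclidean_space set"
  assumes K: "convex K" "bounded K" "0 \<in> interior K" and x: "x \<noteq> 0"
  shows "\<exists>!k. 0 < k \<and> k *\<^sub>R x \<in> frontier K"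
proof (rule ex_ex1I)
  have ne: "interior K \<noteq> {}"
    using K by blast
  have "0 \<in> rel_interior K" "0 + x \<in> affine hull K"
    using K(3) by (simp_all add: rel_interior_nonempty_interior[OF ne] affine_hull_nonempty_interior[OF ne])
  then obtain k where "0 < k" "0 + k *\<^sub>R x \<in> rel_frontier K"
    using ray_to_rel_frontier[OF K(2) _ _ x] by metis
  then show "\<exists>k. 0 < k \<and> k *\<^sub>R x \<in> frontier K"
    by (auto simp: rel_frontier_nonempty_interior[OF ne])
  have "\<not> (0 < k \<and> k < k' \<and> k *\<^sub>R x \<in> frontier K \<and> k' *\<^sub>R x \<in> frontier K)" for k k'
  proof
    assume kk': "0 < k \<and> k < k' \<and> k *\<^sub>R x \<in> frontier K \<and> k' *\<^sub>R x \<in> frontier K"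
    then have "(k / k') *\<^sub>R (k' *\<^sub>R x) \<in> interior K"
      by (intro scaleR_mem_interior_convex[OF K(1,3)]) (auto simp: frontier_def)
    with kk' show False
      by (auto simp: frontier_def)
  qed
  then show "k = k'" if "0 < k \<and> k *\<^sub>R x \<in> frontier K" "0 < k' \<and> k' *\<^sub>R x \<in> frontier K" for k k'
    using that by (metis linorder_neqE_linordered_idom)
qed

lemma radial_projection_frontier:
  fixes K :: "'a::euclidean_space set"
  assumes K: "convex K" "bounded K" "0 \<in> interior K"
  obtains r where "continuous_on (- {0}) r" "\<And>x. x \<noteq> 0 \<Longrightarrow> r x \<in> frontier K"
    "\<And>x. x \<in> K \<Longrightarrow> x \<noteq> 0 \<Longrightarrow> \<exists>t\<ge>1. r x = t *\<^sub>R x"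
proof -
  have disjoint: "frontier K \<inter> interior K = {}"
    by (auto simp: frontier_def)
  define d where "d x = (THE k. 0 < k \<and> k *\<^sub>R x \<in> frontier K)" for x
  have d: "0 < k \<and> k *\<^sub>R x \<in> frontier K \<longleftrightarrow> d x = k" if "x \<noteq> 0" for x k
    using theI'[OF ex1_ray_frontier[OF K that]] ex1_ray_frontier[OF K that] unfolding d_def by blast
  show ?thesis
  proof
    show "continuous_on (- {0}) (\<lambda>x. d x *\<^sub>R x)"
      using continuous_on_compact_surface_projection[of "frontier K" UNIV d]
        compact_frontier_bounded[OF K(2)] K(3) disjoint d
      by (auto simp: Compl_eq_Diff_UNIV)
    show "d x *\<^sub>R x \<in> frontier K" if "x \<noteq> 0" for x
      using d that by blast
    show "\<exists>t\<ge>1. d x *\<^sub>R x = t *\<^sub>R x" if "x \<in> K" "x \<noteq> 0" for x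
    proof -
      have dx: "0 < d x" "d x *\<^sub>R x \<in> frontier K"
        using d[OF that(2)] by blast+
      have "1 \<le> d x"
      proof (rule ccontr)
        assume "\<not> 1 \<le> d x"
        then have "d x *\<^sub>R x \<in> interior K"
          using dx(1) that(1) closure_subset by (intro scaleR_mem_interior_convex[OF K(1,3)]) auto
        then show False
          using dx(2) disjoint by blast
      qed
      then show ?thesis
        by blast
    qed
  qed
qed

lemma compact_uniform_margin:
  fixes h k :: "'a::topological_space \<Rightarrow> real"
  assumes S: "compact S" and cont: "continuous_on S h" "continuous_on S k"
    and h: "\<And>p. p \<in> S \<Longrightarrow> 0 \<le> h p" and k: "\<And>p. p \<in> S \<Longrightarrow> h p = 0 \<Longrightarrow> k p < 0"
  obtains \<eta> where "0 < \<eta>" "\<And>p. p \<in> S \<Longrightarrow> h p < \<eta> \<Longrightarrow> k p < 0"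
proof (cases "S = {}")
  case False
  have "continuous_on S (\<lambda>p. max (h p) (- k p))"
    by (intro continuous_intros cont)
  then obtain p0 where p0: "p0 \<in> S" "\<And>p. p \<in> S \<Longrightarrow> max (h p0) (- k p0) \<le> max (h p) (- k p)"
    using continuous_attains_inf[OF S False] by blast
  show ?thesis
  proof (rule that)
    show pos: "0 < max (h p0) (- k p0)"
      using h[OF p0(1)] k[OF p0(1)] by (cases "h p0 = 0") auto
    show "k p < 0" if "p \<in> S" "h p < max (h p0) (- k p0)" for p
      using p0(2)[OF that(1)] that(2) pos by (simp add: le_max_iff_disj) linarith
  qed
qed (use that[of 1] in auto)

lemma inner_pairing_margin:
  fixes X1 X2 :: "'a::real_inner set" and f g :: "'a \<Rightarrow> 'b::real_inner"
  assumes X: "compact X1" "compact X2" and f: "continuous_on X1 f" and g: "continuous_on X2 g"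
    and ge: "\<And>x y. x \<in> X1 \<Longrightarrow> y \<in> X2 \<Longrightarrow> -1 \<le> x \<bullet> y"
    and fg: "\<And>x y. x \<in> X1 \<Longrightarrow> y \<in> X2 \<Longrightarrow> x \<bullet> y = -1 \<Longrightarrow> f x \<bullet> g y < 0"
  obtains \<eta> where "0 < \<eta>" "\<eta> \<le> 1" "\<And>x y. x \<in> X1 \<Longrightarrow> y \<in> X2 \<Longrightarrow> x \<bullet> y < -1 + \<eta> \<Longrightarrow> f x \<bullet> g y < 0"
proof -
  obtain \<eta> where \<eta>: "0 < \<eta>"
    "\<And>p. p \<in> X1 \<times> X2 \<Longrightarrow> (\<lambda>(x, y). x \<bullet> y + 1) p < \<eta> \<Longrightarrow> (\<lambda>(x, y). f x \<bullet> g y) p < 0"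
  proof (rule compact_uniform_margin)
    show "compact (X1 \<times> X2)"
      using X by (rule compact_Times)
    show "continuous_on (X1 \<times> X2) (\<lambda>(x, y). x \<bullet> y + 1)"
      unfolding case_prod_unfold by (intro continuous_intros)
    show "continuous_on (X1 \<times> X2) (\<lambda>(x, y). f x \<bullet> g y)"
      unfolding case_prod_unfold
      by (intro continuous_intros continuous_on_compose2[OF f] continuous_on_compose2[OF g]) auto
    show "\<And>p. p \<in> X1 \<times> X2 \<Longrightarrow> 0 \<le> (\<lambda>(x, y). x \<bullet> y + 1) p"
      using ge by fastforce
    show "\<And>p. p \<in> X1 \<times> X2 \<Longrightarrow> (\<lambda>(x, y). x \<bullet> y + 1) p = 0 \<Longrightarrow> (\<lambda>(x, y). f x \<bullet> g y) p < 0"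
      using fg by auto
  qed (rule that)
  show ?thesis
  proof (rule that[of "min \<eta> 1"])
    show "f x \<bullet> g y < 0" if "x \<in> X1" "y \<in> X2" "x \<bullet> y < -1 + min \<eta> 1" for x y
      using \<eta>(2)[of "(x, y)"] that by simp
  qed (use \<eta>(1) in simp_all)
qed

lemma continuous_selection_inner_le:
  fixes A X :: "'a::real_inner set"
  assumes A: "convex A" and X: "compact X" and touch: "\<And>y. y \<in> X \<Longrightarrow> \<exists>x\<in>A. x \<bullet> y < c"
  obtains \<phi> where "continuous_on X \<phi>" "\<And>y. y \<in> X \<Longrightarrow> \<phi> y \<in> A" "\<And>y. y \<in> X \<Longrightarrow> \<phi> y \<bullet> y \<le> c"
proof -
  obtain V where V: "V \<subseteq> A" "finite V" "X \<subseteq> (\<Union>v\<in>V. {y. v \<bullet> y < c})"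
  proof (rule compactE_image[OF X, of A "\<lambda>v. {y. v \<bullet> y < c}"])
    show "X \<subseteq> (\<Union>v\<in>A. {y. v \<bullet> y < c})"
      using touch by blast
  qed (simp_all add: open_halfspace_lt that)
  have "\<exists>\<phi>. continuous_on X \<phi> \<and> (\<forall>y\<in>X. \<phi> y \<in> A \<inter> {x. y \<bullet> x \<le> c})"
  proof (rule convex_selection_finite_open_cover[of V "\<lambda>v. {y. v \<bullet> y < c}" _ _ id])
    show "convex (A \<inter> {x. y \<bullet> x \<le> c})" for y
      using A by (intro convex_Int convex_halfspace_le)
    show "id v \<in> A \<inter> {x. y \<bullet> x \<le> c}" if "v \<in> V" "y \<in> {y. v \<bullet> y < c}" for y v
      using that V(1) by (auto simp: inner_commute)
  qed (use V in \<open>simp_all add: open_halfspace_lt\<close>)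
  then show ?thesis
    using that by (auto simp: inner_commute)
qed

lemma frontier_map_pairing_negative:
  fixes A X :: "(real^'n) set" and f g :: "real^'n \<Rightarrow> real^'n"
  assumes A: "convex A" "compact A" "0 \<in> interior A"
    and X: "compact X" "X \<subseteq> polar A" and touch: "\<And>y. y \<in> X \<Longrightarrow> \<exists>x\<in>A. x \<bullet> y = -1"
    and f: "continuous_on (frontier A) f" and g: "continuous_on X g"
    and fg: "\<And>x y. x \<in> frontier A \<Longrightarrow> y \<in> X \<Longrightarrow> x \<bullet> y = -1 \<Longrightarrow> f x \<bullet> g y < 0"
  obtains \<phi> where "continuous_on X \<phi>" "\<And>y. y \<in> X \<Longrightarrow> \<phi> y \<in> frontier A"
    "\<And>y. y \<in> X \<Longrightarrow> \<phi> y \<bullet> y < 0" "\<And>y. y \<in> X \<Longrightarrow> f (\<phi> y) \<bullet> g y < 0"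
proof -
  have "frontier A \<subseteq> A"
    using A(2) compact_imp_closed frontier_subset_closed by blast
  then have "-1 \<le> x \<bullet> y" if "x \<in> frontier A" "y \<in> X" for x y
    using that X(2) polar_inner_ge by blast
  then obtain \<eta> where \<eta>: "0 < \<eta>" "\<eta> \<le> 1"
    and margin: "\<And>x y. x \<in> frontier A \<Longrightarrow> y \<in> X \<Longrightarrow> x \<bullet> y < -1 + \<eta> \<Longrightarrow> f x \<bullet> g y < 0"
    using inner_pairing_margin[OF compact_frontier[OF A(2)] X(1) f g _ fg] by blast
  have "\<exists>x\<in>A. x \<bullet> y < -1 + \<eta>/2" if y: "y \<in> X" for y
  proof -
    obtain x where "x \<in> A" "x \<bullet> y = -1"
      using touch[OF y] by blast
    then show ?thesis
      using \<eta>(1) by (intro bexI[of _ x]) simp_all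
  qed
  then obtain \<phi>0 where \<phi>0: "continuous_on X \<phi>0" "\<And>y. y \<in> X \<Longrightarrow> \<phi>0 y \<in> A"
    "\<And>y. y \<in> X \<Longrightarrow> \<phi>0 y \<bullet> y \<le> -1 + \<eta>/2"
    using continuous_selection_inner_le[OF A(1) X(1)] by blast
  have negative: "\<phi>0 y \<bullet> y < 0" if "y \<in> X" for y
    using \<phi>0(3)[OF that] \<eta>(2) by linarith
  then have nonzero: "\<phi>0 y \<noteq> 0" if "y \<in> X" for y
    using that by fastforce
  obtain r where r: "continuous_on (- {0}) r" "\<And>x. x \<noteq> 0 \<Longrightarrow> r x \<in> frontier A"
    "\<And>x. x \<in> A \<Longrightarrow> x \<noteq> 0 \<Longrightarrow> \<exists>t\<ge>1. r x = t *\<^sub>R x"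
    using radial_projection_frontier[OF A(1) compact_imp_bounded[OF A(2)] A(3)] by blast
  have close: "r (\<phi>0 y) \<bullet> y \<le> -1 + \<eta>/2" if y: "y \<in> X" for y
  proof -
    obtain t where "t \<ge> 1" "r (\<phi>0 y) = t *\<^sub>R \<phi>0 y"
      using r(3) \<phi>0(2) nonzero y by blast
    then have "r (\<phi>0 y) \<bullet> y \<le> \<phi>0 y \<bullet> y"
      using negative[OF y] by (simp add: mult_le_cancel_right1)
    then show ?thesis
      using \<phi>0(3)[OF y] by linarith
  qed
  show ?thesis
  proof
    show "continuous_on X (r \<circ> \<phi>0)"
      using nonzero by (intro continuous_on_compose continuous_on_subset[OF r(1)] \<phi>0(1)) auto
    show "(r \<circ> \<phi>0) y \<in> frontier A" if "y \<in> X" for y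
      using r(2) nonzero that by simp
    show "(r \<circ> \<phi>0) y \<bullet> y < 0" if "y \<in> X" for y
      using close[OF that] \<eta>(2) by simp
    show "f ((r \<circ> \<phi>0) y) \<bullet> g y < 0" if "y \<in> X" for y
      using margin[OF r(2)[OF nonzero[OF that]] that] close[OF that] \<eta>(1) by simp
  qed
qed

lemma zero_notin_closed_segment_neg:
  fixes a b :: "'a::real_inner"
  assumes "a \<bullet> b < 0"
  shows "0 \<notin> closed_segment a (- b)"
proof
  assume "0 \<in> closed_segment a (- b)"
  then obtain u where u: "0 \<le> u" "u \<le> 1" "(1 - u) *\<^sub>R a - u *\<^sub>R b = 0"
    by (auto simp: in_segment)
  then have "((1 - u) *\<^sub>R a - u *\<^sub>R b) \<bullet> b = 0"
    by simp
  then have "(1 - u) * (a \<bullet> b) = u * (b \<bullet> b)"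
    by (simp add: inner_diff_left)
  moreover have "(1 - u) * (a \<bullet> b) \<le> 0" "0 \<le> u * (b \<bullet> b)"
    using u assms by (simp_all add: mult_nonneg_nonpos)
  ultimately have "(1 - u) * (a \<bullet> b) = 0" "u * (b \<bullet> b) = 0"
    by linarith+
  then have "b = 0"
    using assms by simp
  then show False
    using assms by simp
qed

lemma inj_on_hom_induced_uminus:
  "inj_on (hom_induced p (top_of_set (- {0})) {} (top_of_set (- {0})) {} (uminus :: 'a::real_normed_vector \<Rightarrow> 'a))
     (carrier (homology_group p (top_of_set (- {0}))))"
proof (rule inj_on_inverseI)
  let ?Z = "top_of_set (- {0::'a})"
  let ?N = "hom_induced p ?Z {} ?Z {} (uminus :: 'a \<Rightarrow> 'a)"
  fix x
  assume x: "x \<in> carrier (homology_group p ?Z)"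
  have uminus_Z: "continuous_map ?Z ?Z uminus"
    by (auto intro!: continuous_intros)
  have "?N (?N x) = hom_induced p ?Z {} ?Z {} (uminus \<circ> uminus) x"
    using hom_induced_compose_empty[OF uminus_Z uminus_Z] by simp
  also have "uminus \<circ> uminus = (id :: 'a \<Rightarrow> 'a)"
    by auto
  also have "hom_induced p ?Z {} ?Z {} id x = x"
    using x by (rule hom_induced_id)
  finally show "?N (?N x) = x" .
qed

lemma homology_degree_transfer:
  fixes X1 X2 :: "'a::real_normed_vector set" and f g \<phi> :: "'a \<Rightarrow> 'a" and d :: int
  assumes \<phi>: "continuous_map (top_of_set X2) (top_of_set X1) \<phi>"
    and f: "continuous_map (top_of_set X1) (top_of_set (- {0})) f"
    and g: "continuous_map (top_of_set X2) (top_of_set (- {0})) g"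
    and X1: "X1 \<subseteq> - {0}" and X2: "X2 \<subseteq> - {0}"
    and f\<phi>: "homotopic_with (\<lambda>h. True) (top_of_set X2) (top_of_set (- {0})) (f \<circ> \<phi>) (uminus \<circ> g)"
    and \<phi>_antipodal: "homotopic_with (\<lambda>h. True) (top_of_set X2) (top_of_set (- {0})) \<phi> uminus"
    and deg: "\<forall>c\<in>carrier (reduced_homology_group p (top_of_set X1)).
        hom_induced p (top_of_set X1) {} (top_of_set (- {0})) {} f c
      = pow (homology_group p (top_of_set (- {0})))
            (hom_induced p (top_of_set X1) {} (top_of_set (- {0})) {} id c) d"
  shows "\<forall>c\<in>carrier (reduced_homology_group p (top_of_set X2)).
        hom_induced p (top_of_set X2) {} (top_of_set (- {0})) {} g c
      = pow (homology_group p (top_of_set (- {0})))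
            (hom_induced p (top_of_set X2) {} (top_of_set (- {0})) {} id c) d"
proof
  fix c
  assume c: "c \<in> carrier (reduced_homology_group p (top_of_set X2))"
  define Z where "Z = top_of_set (- {0::'a})"
  define H where "H = homology_group p Z"
  define N where "N = hom_induced p Z {} Z {} (uminus :: 'a \<Rightarrow> 'a)"
  define ind where "ind X h = hom_induced p (top_of_set X) {} Z {} h" for X :: "'a set" and h :: "'a \<Rightarrow> 'a"
  have uminus_Z: "continuous_map Z Z uminus"
    unfolding Z_def by (auto intro!: continuous_intros)
  have id1: "continuous_map (top_of_set X1) Z id" and id2: "continuous_map (top_of_set X2) Z id"
    unfolding Z_def using X1 X2 by auto
  have N_hom: "N \<in> hom H H"
    unfolding N_def H_def by (rule hom_induced_empty_hom)
  have N_ind: "ind X2 (uminus \<circ> h) c = N (ind X2 h c)"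
    if "continuous_map (top_of_set X2) Z h" for h
    unfolding ind_def N_def using hom_induced_compose_empty[OF that uminus_Z] by simp
  define c1 where "c1 = hom_induced p (top_of_set X2) {} (top_of_set X1) {} \<phi> c"
  have c1: "c1 \<in> carrier (reduced_homology_group p (top_of_set X1))"
    unfolding c1_def using c by (rule hom_induced_reduced)
  have "ind X1 f c1 = ind X2 (f \<circ> \<phi>) c"
    unfolding ind_def c1_def using hom_induced_compose_empty[OF \<phi> f[folded Z_def]] by simp
  also have "\<dots> = ind X2 (uminus \<circ> g) c"
    unfolding ind_def using homology_homotopy_empty[OF f\<phi>[folded Z_def]] by simp
  also have "\<dots> = N (ind X2 g c)"
    using N_ind g[folded Z_def] by blast
  finally have f_c1: "ind X1 f c1 = N (ind X2 g c)" .
  have "ind X1 id c1 = ind X2 \<phi> c"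
    unfolding ind_def c1_def using hom_induced_compose_empty[OF \<phi> id1] by simp
  also have "\<dots> = ind X2 (uminus \<circ> id) c"
    unfolding ind_def using homology_homotopy_empty[OF \<phi>_antipodal[folded Z_def]] by simp
  also have "\<dots> = N (ind X2 id c)"
    using N_ind id2 by blast
  finally have id_c1: "ind X1 id c1 = N (ind X2 id c)" .
  have carrier: "ind X2 h c \<in> carrier H" for h
    unfolding ind_def H_def by (rule hom_induced_carrier)
  have "N (ind X2 g c) = pow H (N (ind X2 id c)) d"
    using deg c1 f_c1 id_c1 unfolding ind_def H_def Z_def by simp
  also have "\<dots> = N (pow H (ind X2 id c) d)"
    using hom_int_pow[OF N_hom carrier] unfolding H_def by (simp add: group_relative_homology_group)
  finally have "ind X2 g c = pow H (ind X2 id c) d"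
    using inj_on_hom_induced_uminus carrier group.int_pow_closed[OF group_relative_homology_group]
    unfolding N_def H_def Z_def by (metis inj_onD)
  then show "hom_induced p (top_of_set X2) {} (top_of_set (- {0})) {} g c
      = pow (homology_group p (top_of_set (- {0})))
            (hom_induced p (top_of_set X2) {} (top_of_set (- {0})) {} id c) d"
    unfolding ind_def H_def Z_def .
qed

(* map_degree_is ignores its second argument, so B and C are arbitrary here. *)
lemma map_degree_is_polar:
  fixes A :: "(real^'n) set" and f g :: "real^'n \<Rightarrow> real^'n"
  assumes A: "convex A" "compact A" "0 \<in> interior A"
    and f: "continuous_map (top_of_set (frontier A)) (top_of_set (- {0})) f"
    and g: "continuous_map (top_of_set (frontier (polar A))) (top_of_set (- {0})) g"
    and fg: "\<And>x y. x \<in> frontier A \<Longrightarrow> y \<in> frontier (polar A) \<Longrightarrow> x \<bullet> y = -1 \<Longrightarrow>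
      f x \<bullet> g y < 0"
    and deg: "map_degree_is A B f d"
  shows "map_degree_is (polar A) C g d"
proof -
  have avoid_zero: "frontier S \<subseteq> - {0}" if "0 \<in> interior S" for S :: "(real^'n) set"
    using that by (auto simp: frontier_def)
  have f_on: "continuous_on (frontier A) f" and g_on: "continuous_on (frontier (polar A)) g"
    using f g by (auto simp: continuous_map_subtopology_eu)
  have "compact (frontier (polar A))"
    using bounded_polar[OF A(3)] by (rule compact_frontier_bounded)
  moreover have "\<exists>x\<in>A. x \<bullet> y = -1" if "y \<in> frontier (polar A)" for y
    using frontier_polar_touch[OF A(2) that] by blast
  ultimately obtain \<phi> where \<phi>: "continuous_on (frontier (polar A)) \<phi>"
    "\<And>y. y \<in> frontier (polar A) \<Longrightarrow> \<phi> y \<in> frontier A"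
    "\<And>y. y \<in> frontier (polar A) \<Longrightarrow> \<phi> y \<bullet> y < 0"
    "\<And>y. y \<in> frontier (polar A) \<Longrightarrow> f (\<phi> y) \<bullet> g y < 0"
    using frontier_map_pairing_negative[OF A _ frontier_polar_subset _ f_on g_on fg] by blast
  show ?thesis
    unfolding map_degree_is_def
  proof (rule homology_degree_transfer[where \<phi>=\<phi> and f=f])
    show "continuous_map (top_of_set (frontier (polar A))) (top_of_set (frontier A)) \<phi>"
      using \<phi>(1,2) by (auto simp: continuous_map_subtopology_eu)
    show "frontier A \<subseteq> - {0}"
      using A(3) by (rule avoid_zero)
    show "frontier (polar A) \<subseteq> - {0}"
      using A(2) compact_imp_bounded zero_in_interior_polar avoid_zero by blast
    show "homotopic_with (\<lambda>h. True) (top_of_set (frontier (polar A))) (top_of_set (- {0}))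
        (f \<circ> \<phi>) (uminus \<circ> g)"
    proof (rule homotopic_with_linear)
      show "continuous_on (frontier (polar A)) (f \<circ> \<phi>)"
        using \<phi>(1,2) by (intro continuous_on_compose continuous_on_subset[OF f_on]) auto
      show "continuous_on (frontier (polar A)) (uminus \<circ> g)"
        using g_on by (intro continuous_on_compose continuous_intros)
      show "closed_segment ((f \<circ> \<phi>) y) ((uminus \<circ> g) y) \<subseteq> - {0}" if "y \<in> frontier (polar A)" for y
        using zero_notin_closed_segment_neg[OF \<phi>(4)[OF that]] by auto
    qed
    show "homotopic_with (\<lambda>h. True) (top_of_set (frontier (polar A))) (top_of_set (- {0})) \<phi> uminus"
    proof (rule homotopic_with_linear)
      show "closed_segment (\<phi> y) (- y) \<subseteq> - {0}" if "y \<in> frontier (polar A)" for y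
        using zero_notin_closed_segment_neg[OF \<phi>(3)[OF that]] by auto
    qed (use \<phi>(1) in \<open>auto intro: continuous_intros\<close>)
  qed (use f g deg in \<open>simp_all add: map_degree_is_def\<close>)
qed

lemma characteristic_maps_degree_iff:
  fixes P Q :: "(real^'n) set"
  assumes P: "polytope P" "0 \<in> interior P" and Q: "polytope Q" "0 \<in> interior Q"
    and f: "characteristic_map P Q \<psi> f"
    and g: "characteristic_map (polar P) (polar Q) (dual_map P Q \<psi>) g"
  shows "map_degree_is P Q f d \<longleftrightarrow> map_degree_is (polar P) (polar Q) g d"
proof -
  have P_polar_polar: "polar (polar P) = P"
    using P by (rule polar_polar_polytope)
  have f_punctured: "continuous_map (top_of_set (frontier P)) (top_of_set (- {0})) f"
    using f Q(2) by (rule characteristic_map_punctured)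
  have g_punctured: "continuous_map (top_of_set (frontier (polar P))) (top_of_set (- {0})) g"
    using g zero_in_interior_polar[OF polytope_imp_bounded[OF Q(1)]] by (rule characteristic_map_punctured)
  have pairing: "f x \<bullet> g y < 0" if "x \<in> frontier P" "y \<in> frontier (polar P)" "x \<bullet> y = -1" for x y
  proof -
    have "x \<in> P" "y \<in> polar P"
      using that(1,2) frontier_polar_subset frontier_subset_closed[OF polytope_imp_closed[OF P(1)]]
      by blast+
    then show ?thesis
      using characteristic_maps_inner[OF P f g _ _ that(3)] by simp
  qed
  show ?thesis
  proof
    assume "map_degree_is P Q f d"
    then show "map_degree_is (polar P) (polar Q) g d"
      using map_degree_is_polar[OF polytope_imp_convex[OF P(1)] polytope_imp_compact[OF P(1)] P(2)
          f_punctured g_punctured pairing] by blast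
  next
    assume "map_degree_is (polar P) (polar Q) g d"
    then have "map_degree_is (polar (polar P)) Q f d"
    proof (rule map_degree_is_polar[OF convex_polar compact_polar[OF P(2)]
          zero_in_interior_polar[OF polytope_imp_bounded[OF P(1)]] g_punctured, rotated -1])
      show "continuous_map (top_of_set (frontier (polar (polar P)))) (top_of_set (- {0})) f"
        using f_punctured by (simp only: P_polar_polar)
      show "g x \<bullet> f y < 0" if "x \<in> frontier (polar P)" "y \<in> frontier (polar (polar P))" "x \<bullet> y = -1"
        for x y
        using pairing[of y x] that by (simp add: P_polar_polar inner_commute)
    qed
    then show "map_degree_is P Q f d"
      by (simp only: P_polar_polar)
  qed
qed

theorem proposition1p2:
  fixes P Q :: "(real^'n) set" and \<psi> :: "(real^'n) set \<Rightarrow> (real^'n) set"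
  assumes "polytope P" and "polytope Q"
    and "0 \<in> interior P" and "0 \<in> interior Q"
    and "order_preserving_faces P Q \<psi>"
  shows "cdeg P Q \<psi> = cdeg (polar P) (polar Q) (dual_map P Q \<psi>)"
proof -
  have "polyhedron (polar P)" "interior (polar P) \<noteq> {}"
    using assms(1,3) polytope_polar polytope_imp_polyhedron zero_in_interior_polar polytope_imp_bounded
    by blast+
  then obtain g where g: "characteristic_map (polar P) (polar Q) (dual_map P Q \<psi>) g"
    using characteristic_map_exists order_preserving_dual_map[OF assms(1,3,2,4,5)] by blast
  obtain f where f: "characteristic_map P Q \<psi> f"
    using characteristic_map_exists[OF polytope_imp_polyhedron[OF assms(1)] _ assms(5)] assms(3) by blast
  \<comment> \<open>no uniqueness of the degree is needed: the predicates under \<open>THE\<close> agree for every \<open>d\<close>\<close>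
  have "(\<exists>f. characteristic_map P Q \<psi> f \<and> map_degree_is P Q f d) \<longleftrightarrow>
    (\<exists>g. characteristic_map (polar P) (polar Q) (dual_map P Q \<psi>) g \<and> map_degree_is (polar P) (polar Q) g d)"
    for d
    using characteristic_maps_degree_iff[OF assms(1,3,2,4)] f g by blast
  then show ?thesis
    unfolding cdeg_def by simp
qed

end
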